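(* For a graph $G$, $\gamma_{(2,2,0)}(G)=3$ if and only if $\gamma_{\times2,t}(G)=\gamma(G)+1=3$.
   Context: All graphs are finite and simple; $N(v)$ is the open neighbourhood. $\gamma_{(2,2,0)}(G)$ is the minimum of $\sum_v f(v)$ over functions $f:V(G)\to\{0,1,2\}$ such that $\sum_{u\in N(v)}f(u)\ge2$ for every $v$ with $f(v)\in\{0,1\}$. $\gamma(G)$ is the domination number and $\gamma_{\times2,t}(G)$ is the minimum size of $S\subseteq V(G)$ such that every vertex has at least two neighbours in $S$ (defined when $G$ has minimum degree at least $2$). *)

theory Defs
  imports Main
begin

definition simple_graph :: "'a set \<Rightarrow> ('a \<Rightarrow> 'a \<Rightarrow> bool) \<Rightarrow> bool" where
  "simple_graph V E \<longleftrightarrow> finite V \<and> (\<forall>u v. E u v \<longrightarrow> u \<in> V \<and> v \<in> V)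
     \<and> (\<forall>u v. E u v \<longrightarrow> E v u) \<and> (\<forall>v. \<not> E v v)"

definition nbhd :: "'a set \<Rightarrow> ('a \<Rightarrow> 'a \<Rightarrow> bool) \<Rightarrow> 'a \<Rightarrow> 'a set" where
  "nbhd V E v = {u \<in> V. E v u}"

definition min_degree_ge2 :: "'a set \<Rightarrow> ('a \<Rightarrow> 'a \<Rightarrow> bool) \<Rightarrow> bool" where
  "min_degree_ge2 V E \<longleftrightarrow> (\<forall>v\<in>V. card (nbhd V E v) \<ge> 2)"

definition is_220_function :: "'a set \<Rightarrow> ('a \<Rightarrow> 'a \<Rightarrow> bool) \<Rightarrow> ('a \<Rightarrow> nat) \<Rightarrow> bool" where
  "is_220_function V E f \<longleftrightarrow> (\<forall>v\<in>V. f v \<le> 2) \<and> (\<forall>v. v \<notin> V \<longrightarrow> f v = 0)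
     \<and> (\<forall>v\<in>V. f v \<in> {0,1} \<longrightarrow> (\<Sum>u\<in>nbhd V E v. f u) \<ge> 2)"

definition gamma_220 :: "'a set \<Rightarrow> ('a \<Rightarrow> 'a \<Rightarrow> bool) \<Rightarrow> nat" where
  "gamma_220 V E = Inf {(\<Sum>v\<in>V. f v) | f. is_220_function V E f}"

definition dominating_set :: "'a set \<Rightarrow> ('a \<Rightarrow> 'a \<Rightarrow> bool) \<Rightarrow> 'a set \<Rightarrow> bool" where
  "dominating_set V E S \<longleftrightarrow> S \<subseteq> V \<and> (\<forall>v\<in>V. v \<in> S \<or> (\<exists>u\<in>S. E v u))"

definition domination_number :: "'a set \<Rightarrow> ('a \<Rightarrow> 'a \<Rightarrow> bool) \<Rightarrow> nat" where
  "domination_number V E = Inf {card S | S. dominating_set V E S}"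

definition double_total_dominating_set :: "'a set \<Rightarrow> ('a \<Rightarrow> 'a \<Rightarrow> bool) \<Rightarrow> 'a set \<Rightarrow> bool" where
  "double_total_dominating_set V E S \<longleftrightarrow> S \<subseteq> V \<and> (\<forall>v\<in>V. card (nbhd V E v \<inter> S) \<ge> 2)"

text \<open>Only meaningful when the minimum degree is at least 2 (otherwise no such set exists).\<close>
definition double_total_domination_number :: "'a set \<Rightarrow> ('a \<Rightarrow> 'a \<Rightarrow> bool) \<Rightarrow> nat" where
  "double_total_domination_number V E = Inf {card S | S. double_total_dominating_set V E S}"

end

theory Submission
  imports Defs
begin

text \<open>
  If a (2,2,0)-function of weight at most 3 gives the value 2 to a vertex x, every other
  vertex has value at most 1 and must collect weight 2 from its neighbourhood, which is
  only possible through x: so x is universal. A vertex of value 1 together with its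
  neighbourhood already carries weight 3. Hence both \<open>gamma_220 \<le> 2\<close> and \<open>\<gamma> \<le> 1\<close> mean that
  the graph is empty or has a universal vertex, and once this fails, a (2,2,0)-function of
  weight 3 is the characteristic function of a double total dominating set of size 3.
  Conversely, the characteristic function of such a set is a (2,2,0)-function of weight 3,
  and removing any one of its vertices leaves a dominating set of size 2.
\<close>

lemma Inf_setcompr_nat_le: "P x \<Longrightarrow> Inf {m y | y. P y} \<le> (m x :: nat)"
  by (rule cInf_lower[OF _ bdd_below_bot]) auto

lemma Inf_setcompr_nat_attained:
  assumes "P x"
  obtains y where "P y" "Inf {m y | y. P y} = (m y :: nat)"
  using Inf_nat_def1[of "{m y | y. P y}"] assms by auto

definition universal_vertex :: "'a set \<Rightarrow> ('a \<Rightarrow> 'a \<Rightarrow> bool) \<Rightarrow> 'a \<Rightarrow> bool" where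
  "universal_vertex V E x \<longleftrightarrow> x \<in> V \<and> (\<forall>v\<in>V. v \<noteq> x \<longrightarrow> E v x)"

context
  fixes V :: "'a set" and E :: "'a \<Rightarrow> 'a \<Rightarrow> bool"
  assumes G: "simple_graph V E"
begin

lemma finite_nbhd: "finite (nbhd V E v)"
  using G by (auto simp: simple_graph_def nbhd_def)

lemma sum_nbhd_add_le:
  assumes "x \<in> V" "x \<notin> nbhd V E v"
  shows "f x + (\<Sum>u\<in>nbhd V E v. f u) \<le> (\<Sum>u\<in>V. f u :: nat)"
proof -
  have "f x + (\<Sum>u\<in>nbhd V E v. f u) = (\<Sum>u\<in>insert x (nbhd V E v). f u)"
    using assms(2) finite_nbhd by simp
  also have "\<dots> \<le> (\<Sum>u\<in>V. f u)"
    using G assms(1) by (intro sum_mono2) (auto simp: simple_graph_def nbhd_def)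
  finally show ?thesis .
qed

lemma is_220_function_weight_ge_3:
  assumes f: "is_220_function V E f" and x: "x \<in> V" "f x = 1"
  shows "3 \<le> (\<Sum>v\<in>V. f v)"
proof -
  have "x \<notin> nbhd V E x"
    using G by (auto simp: simple_graph_def nbhd_def)
  from sum_nbhd_add_le[OF x(1) this, of f] show ?thesis
    using f x by (auto simp: is_220_function_def)
qed

lemma is_220_function_universal_vertex:
  assumes f: "is_220_function V E f" and x: "x \<in> V" "f x = 2"
    and weight: "(\<Sum>v\<in>V. f v) \<le> 3"
  shows "universal_vertex V E x"
  unfolding universal_vertex_def
proof (intro conjI ballI impI x(1))
  fix v assume v: "v \<in> V" "v \<noteq> x"
  have "f x + f v = (\<Sum>u\<in>{x, v}. f u)"
    using v by simp
  also have "\<dots> \<le> (\<Sum>u\<in>V. f u)"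
    using G x v by (intro sum_mono2) (auto simp: simple_graph_def)
  finally have "f v \<le> 1"
    using weight x by simp
  then have nbhd_weight: "2 \<le> (\<Sum>u\<in>nbhd V E v. f u)"
    using f v by (auto simp: is_220_function_def)
  show "E v x"
  proof (rule ccontr)
    assume "\<not> E v x"
    then have "x \<notin> nbhd V E v"
      by (simp add: nbhd_def)
    from sum_nbhd_add_le[OF x(1) this, of f] show False
      using nbhd_weight x weight by linarith
  qed
qed

lemma is_220_function_nonzero:
  assumes f: "is_220_function V E f" and v: "v \<in> V"
  obtains x where "x \<in> V" "f x \<noteq> 0"
proof (rule ccontr)
  assume "\<not> thesis"
  with that have "\<forall>x\<in>V. f x = 0"
    by blast
  moreover have "nbhd V E v \<subseteq> V"
    by (auto simp: nbhd_def)
  ultimately show False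
    using f v by (auto simp: is_220_function_def subset_iff)
qed

lemma gamma_220_le: "is_220_function V E f \<Longrightarrow> gamma_220 V E \<le> (\<Sum>v\<in>V. f v)"
  unfolding gamma_220_def by (rule Inf_setcompr_nat_le)

lemma gamma_220_attained:
  obtains f where "is_220_function V E f" "gamma_220 V E = (\<Sum>v\<in>V. f v)"
proof -
  have "is_220_function V E (\<lambda>v. if v \<in> V then 2 else 0)"
    by (auto simp: is_220_function_def)
  then show thesis
    by (rule Inf_setcompr_nat_attained[where m = "\<lambda>f. \<Sum>v\<in>V. f v"])
      (simp add: that gamma_220_def)
qed

lemma gamma_220_le_2_iff: "gamma_220 V E \<le> 2 \<longleftrightarrow> V = {} \<or> (\<exists>x. universal_vertex V E x)"
proof
  assume le2: "gamma_220 V E \<le> 2"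
  obtain f where f: "is_220_function V E f" and weight: "gamma_220 V E = (\<Sum>v\<in>V. f v)"
    by (rule gamma_220_attained)
  show "V = {} \<or> (\<exists>x. universal_vertex V E x)"
  proof (cases "V = {}")
    case False
    then obtain x where x: "x \<in> V" "f x \<noteq> 0"
      using is_220_function_nonzero[OF f] by blast
    have "f x \<noteq> 1"
      using is_220_function_weight_ge_3[OF f x(1)] le2 weight by auto
    then have "f x = 2"
      using f x by (auto simp: is_220_function_def)
    then show ?thesis
      using is_220_function_universal_vertex[OF f x(1)] le2 weight by auto
  qed simp
next
  assume "V = {} \<or> (\<exists>x. universal_vertex V E x)"
  then show "gamma_220 V E \<le> 2"
  proof
    assume "V = {}"
    then have "is_220_function V E (\<lambda>_. 0)"
      by (simp add: is_220_function_def)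
    from gamma_220_le[OF this] show ?thesis
      by simp
  next
    assume "\<exists>x. universal_vertex V E x"
    then obtain x where x: "universal_vertex V E x" ..
    have "is_220_function V E (\<lambda>v. if v = x then 2 else 0)"
      unfolding is_220_function_def
    proof (intro conjI ballI allI impI)
      fix v assume v: "v \<in> V" "(if v = x then 2 else 0 :: nat) \<in> {0, 1}"
      then have "x \<in> nbhd V E v"
        using x by (auto simp: universal_vertex_def nbhd_def)
      then show "2 \<le> (\<Sum>u\<in>nbhd V E v. if u = x then 2 else 0 :: nat)"
        using finite_nbhd by simp
    qed (use x in \<open>auto simp: universal_vertex_def\<close>)
    from gamma_220_le[OF this] show ?thesis
      using G x by (simp add: simple_graph_def universal_vertex_def)
  qed
qed

lemma domination_number_le: "dominating_set V E S \<Longrightarrow> domination_number V E \<le> card S"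
  unfolding domination_number_def by (rule Inf_setcompr_nat_le)

lemma domination_number_attained:
  obtains S where "dominating_set V E S" "domination_number V E = card S"
proof -
  have "dominating_set V E V"
    by (simp add: dominating_set_def)
  then show thesis
    by (rule Inf_setcompr_nat_attained[where m = card]) (simp add: that domination_number_def)
qed

lemma domination_number_le_1_iff:
  "domination_number V E \<le> 1 \<longleftrightarrow> V = {} \<or> (\<exists>x. universal_vertex V E x)"
proof
  assume le1: "domination_number V E \<le> 1"
  obtain S where S: "dominating_set V E S" and card_S: "domination_number V E = card S"
    by (rule domination_number_attained)
  have "finite S"
    using G S finite_subset by (auto simp: simple_graph_def dominating_set_def)
  then have "card S = 0 \<or> card S = 1"
    using le1 card_S by linarith
  then have "S = {} \<or> (\<exists>x. S = {x})"
    using \<open>finite S\<close> by (auto simp: card_1_singleton_iff)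
  then show "V = {} \<or> (\<exists>x. universal_vertex V E x)"
    using S by (auto simp: dominating_set_def universal_vertex_def)
next
  assume "V = {} \<or> (\<exists>x. universal_vertex V E x)"
  then show "domination_number V E \<le> 1"
  proof
    assume "V = {}"
    then have "dominating_set V E {}"
      by (simp add: dominating_set_def)
    from domination_number_le[OF this] show ?thesis
      by simp
  next
    assume "\<exists>x. universal_vertex V E x"
    then obtain x where "universal_vertex V E x" ..
    then have "dominating_set V E {x}"
      by (auto simp: dominating_set_def universal_vertex_def)
    from domination_number_le[OF this] show ?thesis
      by simp
  qed
qed

lemma gamma_220_le_2_iff_domination_number_le_1:
  "gamma_220 V E \<le> 2 \<longleftrightarrow> domination_number V E \<le> 1"
  by (simp only: gamma_220_le_2_iff domination_number_le_1_iff)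

lemma double_total_domination_number_le:
  "double_total_dominating_set V E S \<Longrightarrow> double_total_domination_number V E \<le> card S"
  unfolding double_total_domination_number_def by (rule Inf_setcompr_nat_le)

lemma double_total_domination_number_attained:
  assumes "min_degree_ge2 V E"
  obtains S where "double_total_dominating_set V E S"
    "double_total_domination_number V E = card S"
proof -
  have "nbhd V E v \<inter> V = nbhd V E v" for v
    by (auto simp: nbhd_def)
  with assms have "double_total_dominating_set V E V"
    by (simp add: double_total_dominating_set_def min_degree_ge2_def)
  then show thesis
    by (rule Inf_setcompr_nat_attained[where m = card])
      (simp add: that double_total_domination_number_def)
qed

lemma min_degree_ge2_if_double_total_dominating_set:
  assumes "double_total_dominating_set V E S"
  shows "min_degree_ge2 V E"
  unfolding min_degree_ge2_def
proof
  fix v assume "v \<in> V"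
  then have "2 \<le> card (nbhd V E v \<inter> S)"
    using assms by (simp add: double_total_dominating_set_def)
  also have "\<dots> \<le> card (nbhd V E v)"
    using finite_nbhd by (intro card_mono) auto
  finally show "2 \<le> card (nbhd V E v)" .
qed

lemma is_220_function_of_bool:
  assumes "double_total_dominating_set V E S"
  shows "is_220_function V E (\<lambda>v. of_bool (v \<in> S))"
    and "(\<Sum>v\<in>V. of_bool (v \<in> S) :: nat) = card S"
proof -
  have "finite V" and "S \<subseteq> V"
    using G assms by (auto simp: simple_graph_def double_total_dominating_set_def)
  then show "(\<Sum>v\<in>V. of_bool (v \<in> S) :: nat) = card S"
    by (simp add: Int_absorb1 Collect_mem_eq)
  show "is_220_function V E (\<lambda>v. of_bool (v \<in> S))"
    using assms \<open>S \<subseteq> V\<close> finite_nbhd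
    by (auto simp: is_220_function_def double_total_dominating_set_def Collect_mem_eq)
qed

lemma gamma_220_le_card:
  "double_total_dominating_set V E S \<Longrightarrow> gamma_220 V E \<le> card S"
  using gamma_220_le is_220_function_of_bool by metis

lemma domination_number_less_card:
  assumes S: "double_total_dominating_set V E S" and a: "a \<in> S"
  shows "domination_number V E < card S"
proof -
  have "dominating_set V E (S - {a})"
    unfolding dominating_set_def
  proof (intro conjI ballI)
    show "S - {a} \<subseteq> V"
      using S by (auto simp: double_total_dominating_set_def)
  next
    fix v assume "v \<in> V"
    then have "2 \<le> card (nbhd V E v \<inter> S)"
      using S by (simp add: double_total_dominating_set_def)
    then have "\<not> nbhd V E v \<inter> S \<subseteq> {a}"
      using card_mono[of "{a}" "nbhd V E v \<inter> S"] by auto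
    then show "v \<in> S - {a} \<or> (\<exists>u\<in>S - {a}. E v u)"
      by (auto simp: nbhd_def)
  qed
  moreover have "finite S"
    using G S finite_subset by (auto simp: simple_graph_def double_total_dominating_set_def)
  ultimately show ?thesis
    using domination_number_le card_Diff1_less[OF _ a] by (meson le_less_trans)
qed

lemma double_total_dominating_set_if_gamma_220_eq_3:
  assumes gamma: "gamma_220 V E = 3"
  obtains S where "double_total_dominating_set V E S" "card S = 3"
proof -
  obtain f where f: "is_220_function V E f" and weight: "gamma_220 V E = (\<Sum>v\<in>V. f v)"
    by (rule gamma_220_attained)
  have "\<not> universal_vertex V E x" for x
    using gamma gamma_220_le_2_iff by auto
  then have "f v \<noteq> 2" for v
    using is_220_function_universal_vertex[OF f, of v] f gamma weight
    by (cases "v \<in> V") (auto simp: is_220_function_def)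
  moreover have "f v \<le> 2" for v
    using f by (cases "v \<in> V") (auto simp: is_220_function_def)
  ultimately have f_le_1: "f v \<le> 1" for v
    by (metis le_antisym not_less_eq_eq numeral_2_eq_2 One_nat_def)
  define S where "S = {v. f v = 1}"
  have f_eq: "f = (\<lambda>v. of_bool (v \<in> S))"
    using f_le_1 by (force simp: S_def le_Suc_eq)
  have "double_total_dominating_set V E S"
    unfolding double_total_dominating_set_def
  proof (intro conjI ballI)
    show "S \<subseteq> V"
      using f by (auto simp: S_def is_220_function_def)
  next
    fix v assume "v \<in> V"
    then have "2 \<le> (\<Sum>u\<in>nbhd V E v. of_bool (u \<in> S) :: nat)"
      using f f_le_1[of v] by (auto simp: f_eq is_220_function_def)
    then show "2 \<le> card (nbhd V E v \<inter> S)"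
      using finite_nbhd by (simp add: Collect_mem_eq)
  qed
  moreover from this have "card S = 3"
    using is_220_function_of_bool(2) gamma weight f_eq by simp
  ultimately show thesis
    by (rule that)
qed

end

theorem theorem32:
  fixes V :: "'a set" and E :: "'a \<Rightarrow> 'a \<Rightarrow> bool"
  assumes "simple_graph V E"
  shows "gamma_220 V E = 3 \<longleftrightarrow>
    (min_degree_ge2 V E \<and> double_total_domination_number V E = 3
     \<and> domination_number V E + 1 = 3)"
proof
  assume gamma: "gamma_220 V E = 3"
  obtain S where S: "double_total_dominating_set V E S" "card S = 3"
    using double_total_dominating_set_if_gamma_220_eq_3[OF assms gamma] .
  have min_degree: "min_degree_ge2 V E"
    by (rule min_degree_ge2_if_double_total_dominating_set[OF assms S(1)])
  obtain T where T: "double_total_dominating_set V E T"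
    "double_total_domination_number V E = card T"
    by (rule double_total_domination_number_attained[OF assms min_degree])
  have "3 \<le> card T" and "card T \<le> 3"
    using gamma_220_le_card[OF assms T(1)] double_total_domination_number_le[OF assms S(1)]
      gamma T(2) S(2) by simp_all
  moreover have "\<not> domination_number V E \<le> 1"
    using gamma gamma_220_le_2_iff_domination_number_le_1[OF assms] by simp
  moreover have "domination_number V E < 3"
    using domination_number_less_card[OF assms S(1)] S(2) by force
  ultimately show "min_degree_ge2 V E \<and> double_total_domination_number V E = 3
      \<and> domination_number V E + 1 = 3"
    using min_degree T(2) by simp
next
  assume "min_degree_ge2 V E \<and> double_total_domination_number V E = 3
    \<and> domination_number V E + 1 = 3"
  then have min_degree: "min_degree_ge2 V E" and dtdn: "double_total_domination_number V E = 3"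
    and dn: "domination_number V E = 2"
    by simp_all
  obtain S where "double_total_dominating_set V E S"
    "double_total_domination_number V E = card S"
    by (rule double_total_domination_number_attained[OF assms min_degree])
  then have "gamma_220 V E \<le> 3"
    using gamma_220_le_card[OF assms] dtdn by metis
  moreover have "\<not> gamma_220 V E \<le> 2"
    using dn gamma_220_le_2_iff_domination_number_le_1[OF assms] by simp
  ultimately show "gamma_220 V E = 3"
    by simp
qed

end
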